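(* For every $u \in W$, the sequence $\{\nu^k(u)\}_{k \ge 0}$ is descending, i.e. $\nu^{k+1}(u) \subseteq \nu^k(u)$ for all $k \ge 0$, and it stabilizes after finitely many terms.
   Context: $W$ is the Weyl group of a root system $\Pi$ with simple roots $\Delta$ and positive roots $\Pi_+$. $\alpha\le\beta$ iff $\beta-\alpha$ is a nonnegative integer combination of simple roots. For $A\subseteq\Pi_+$, $\mathrm{Adj}(A) = \{\alpha\in\Pi_+ : \exists\beta\in A,\ \alpha\le\beta\}$. For $u\in W$: $\nu^0(u) = u(\Pi_+)\cap\Pi_+$ and $\nu^k(u) = u(\mathrm{Adj}\,\nu^{k-1}(u))\cap\Pi_+$ for $k\ge1$. *)

theory Defs
  imports "HOL-Analysis.Analysis"
begin

definition refl_root :: "'a::euclidean_space \<Rightarrow> 'a \<Rightarrow> 'a" where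
  "refl_root a x = x - (2 * (x \<bullet> a) / (a \<bullet> a)) *\<^sub>R a"

definition root_system :: "'a::euclidean_space set \<Rightarrow> bool" where
  "root_system R \<longleftrightarrow> finite R \<and> 0 \<notin> R \<and> span R = UNIV \<and>
     (\<forall>a\<in>R. \<forall>b\<in>R. refl_root a b \<in> R \<and> 2 * (b \<bullet> a) / (a \<bullet> a) \<in> \<int>) \<and>
     (\<forall>a\<in>R. \<forall>c. c *\<^sub>R a \<in> R \<longrightarrow> c = 1 \<or> c = -1)"

definition nonneg_comb :: "'a::euclidean_space set \<Rightarrow> 'a \<Rightarrow> bool" where
  "nonneg_comb D v \<longleftrightarrow> (\<exists>c::'a \<Rightarrow> nat. v = (\<Sum>d\<in>D. of_nat (c d) *\<^sub>R d))"

definition simple_roots :: "'a::euclidean_space set \<Rightarrow> 'a set \<Rightarrow> bool" where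
  "simple_roots R D \<longleftrightarrow> D \<subseteq> R \<and> independent D \<and>
     (\<forall>b\<in>R. nonneg_comb D b \<or> nonneg_comb D (- b))"

definition pos_roots :: "'a::euclidean_space set \<Rightarrow> 'a set \<Rightarrow> 'a set" where
  "pos_roots R D = {b\<in>R. nonneg_comb D b}"

inductive_set weyl_group :: "'a::euclidean_space set \<Rightarrow> ('a \<Rightarrow> 'a) set" for R where
  id_in: "id \<in> weyl_group R"
| refl_comp: "w \<in> weyl_group R \<Longrightarrow> a \<in> R \<Longrightarrow> refl_root a \<circ> w \<in> weyl_group R"

definition root_le :: "'a::euclidean_space set \<Rightarrow> 'a \<Rightarrow> 'a \<Rightarrow> bool" where
  "root_le D a b \<longleftrightarrow> nonneg_comb D (b - a)"

definition Adj :: "'a::euclidean_space set \<Rightarrow> 'a set \<Rightarrow> 'a set \<Rightarrow> 'a set" where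
  "Adj R D A = {a \<in> pos_roots R D. \<exists>b\<in>A. root_le D a b}"

fun nu :: "'a::euclidean_space set \<Rightarrow> 'a set \<Rightarrow> ('a \<Rightarrow> 'a) \<Rightarrow> nat \<Rightarrow> 'a set" where
  "nu R D u 0 = u ` pos_roots R D \<inter> pos_roots R D"
| "nu R D u (Suc k) = u ` Adj R D (nu R D u k) \<inter> pos_roots R D"

end

theory Submission
  imports Defs
begin

(* Adj is monotone and lands in the positive roots, so nu 1 \<subseteq> nu 0 and then, inductively,
   nu (k+2) \<subseteq> nu (k+1). A decreasing chain of subsets of the finite set of positive roots
   is eventually constant. Neither step uses that u lies in the Weyl group. *)

lemma decreasing_finite_sets_stabilize:
  fixes A :: "nat \<Rightarrow> 'a set"
  assumes decr: "\<And>k. A (Suc k) \<subseteq> A k" and fin: "finite (A 0)"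
  shows "\<exists>N. \<forall>k\<ge>N. A k = A N"
proof -
  have antimono: "A k \<subseteq> A j" if "j \<le> k" for j k
    using lift_Suc_antimono_le[of A, OF decr that] .
  obtain N where least: "\<And>k. card (A N) \<le> card (A k)"
    using ex_has_least_nat[of "\<lambda>_. True" 0 "\<lambda>k. card (A k)"] by blast
  have "A k = A N" if "N \<le> k" for k
  proof (rule card_subset_eq)
    show "finite (A N)" using fin antimono[of 0 N] finite_subset by blast
    show "A k \<subseteq> A N" using antimono[OF that] .
    then show "card (A k) = card (A N)"
      using card_mono[OF \<open>finite (A N)\<close>] least[of k] by (simp add: le_antisym)
  qed
  then show ?thesis by blast
qed

lemma Adj_mono: "A \<subseteq> B \<Longrightarrow> Adj R D A \<subseteq> Adj R D B"
  unfolding Adj_def by blast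

lemma Adj_subset_pos_roots: "Adj R D A \<subseteq> pos_roots R D"
  unfolding Adj_def by blast

lemma nu_Suc_subset: "nu R D u (Suc k) \<subseteq> nu R D u k"
proof (induction k)
  case 0
  show ?case
    using Adj_subset_pos_roots[of R D "nu R D u 0"] unfolding nu.simps by blast
next
  case (Suc k)
  show ?case
    using Adj_mono[OF Suc.IH, of R D] unfolding nu.simps(2) by blast
qed

lemma nu_subset_pos_roots: "nu R D u k \<subseteq> pos_roots R D"
  by (cases k) auto

lemma finite_pos_roots:
  assumes "root_system R"
  shows "finite (pos_roots R D)"
proof -
  have "finite R" using assms unfolding root_system_def by blast
  then show ?thesis unfolding pos_roots_def by simp
qed

theorem proposition3p2:
  fixes R D :: "'a::euclidean_space set" and u :: "'a \<Rightarrow> 'a"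
  assumes "root_system R" and "simple_roots R D" and "u \<in> weyl_group R"
  shows "(\<forall>k. nu R D u (Suc k) \<subseteq> nu R D u k) \<and>
         (\<exists>N. \<forall>k\<ge>N. nu R D u k = nu R D u N)"
proof -
  have "finite (nu R D u 0)"
    by (rule finite_subset[OF nu_subset_pos_roots finite_pos_roots[OF assms(1)]])
  then show ?thesis
    using decreasing_finite_sets_stabilize[of "nu R D u", OF nu_Suc_subset] nu_Suc_subset
    by blast
qed

end
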